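(* Let $\mathcal P_X,\mathcal P_Y$ be probability measures on a measurable space $(E,\mathcal E)$ with $\mathcal P_Y\ll\mathcal P_X$, let $L=d\mathcal P_Y/d\mathcal P_X$, and assume $L(\mathbf Z)$ has a continuous distribution when $\mathbf Z\sim\mathcal P_X$. Let $\mathbf Z_X,\mathbf Z_X'$ be i.i.d. with law $\mathcal P_X$ and define $\delta:=\mathbb E\,|L(\mathbf Z_X)-L(\mathbf Z_X')|$. Then $$2\,d_{tv}(\mathcal P_X,\mathcal P_Y)\le \delta\le 4\,d_{tv}(\mathcal P_X,\mathcal P_Y).$$
   Context: $d_{tv}(\mathcal P_X,\mathcal P_Y)=\sup_{A\in\mathcal E}|\mathcal P_Y(A)-\mathcal P_X(A)|$ denotes the total variation distance. *)

theory Defs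
  imports "HOL-Probability.Probability"
begin

definition tv_dist :: "'a measure \<Rightarrow> 'a measure \<Rightarrow> real" where
  "tv_dist PX PY = (SUP A \<in> sets PX. \<bar>measure PY A - measure PX A\<bar>)"

end

theory Submission
  imports Defs
begin

text \<open>Scheffe's identity \<open>d\<^sub>t\<^sub>v(P\<^sub>X, P\<^sub>Y) = \<integral>|L - 1| dP\<^sub>X / 2\<close> reduces both bounds to
  comparing \<open>\<delta>\<close> with the mean absolute deviation of \<open>L\<close>, whose mean is 1.
  For fixed \<open>x\<close>, Jensen gives \<open>\<integral>|L x - L y| dP\<^sub>X(y) \<ge> |L x - 1|\<close>, and the triangle
  inequality through 1 gives \<open>\<le> |L x - 1| + \<integral>|L - 1| dP\<^sub>X\<close>; integrating in \<open>x\<close> yields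
  \<open>\<integral>|L - 1| \<le> \<delta> \<le> 2 \<integral>|L - 1|\<close>.\<close>

lemma abs_integral_indicator_le_half_L1:
  fixes f :: "'a \<Rightarrow> real"
  assumes f: "integrable M f" and mean0: "(\<integral>x. f x \<partial>M) = 0" and A: "A \<in> sets M"
  shows "\<bar>\<integral>x. indicator A x * f x \<partial>M\<bar> \<le> (\<integral>x. \<bar>f x\<bar> \<partial>M) / 2"
proof -
  have fA: "integrable M (\<lambda>x. indicator A x * f x)"
    using integrable_mult_indicator[OF A f] by simp
  have pos: "integrable M (\<lambda>x. (\<bar>f x\<bar> + f x) / 2)" and neg: "integrable M (\<lambda>x. (f x - \<bar>f x\<bar>) / 2)"
    using f by auto
  have "(\<integral>x. indicator A x * f x \<partial>M) \<le> (\<integral>x. (\<bar>f x\<bar> + f x) / 2 \<partial>M)"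
    by (rule integral_mono[OF fA pos]) (auto simp: indicator_def abs_if)
  moreover have "(\<integral>x. (f x - \<bar>f x\<bar>) / 2 \<partial>M) \<le> (\<integral>x. indicator A x * f x \<partial>M)"
    by (rule integral_mono[OF neg fA]) (auto simp: indicator_def abs_if)
  ultimately show ?thesis
    using f mean0 by simp
qed

lemma integral_indicator_positive_part_eq_half_L1:
  fixes f :: "'a \<Rightarrow> real"
  assumes f: "integrable M f" and mean0: "(\<integral>x. f x \<partial>M) = 0"
  shows "(\<integral>x. indicator {x \<in> space M. 0 < f x} x * f x \<partial>M) = (\<integral>x. \<bar>f x\<bar> \<partial>M) / 2"
proof -
  have "(\<integral>x. indicator {x \<in> space M. 0 < f x} x * f x \<partial>M) = (\<integral>x. (\<bar>f x\<bar> + f x) / 2 \<partial>M)"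
    by (intro Bochner_Integration.integral_cong) (auto simp: indicator_def)
  also have "\<dots> = (\<integral>x. \<bar>f x\<bar> \<partial>M) / 2"
    using f mean0 by simp
  finally show ?thesis .
qed

lemma SUP_abs_integral_indicator_eq_half_L1:
  fixes f :: "'a \<Rightarrow> real"
  assumes f: "integrable M f" and mean0: "(\<integral>x. f x \<partial>M) = 0"
  shows "(SUP A \<in> sets M. \<bar>\<integral>x. indicator A x * f x \<partial>M\<bar>) = (\<integral>x. \<bar>f x\<bar> \<partial>M) / 2"
proof (rule antisym)
  show "(SUP A \<in> sets M. \<bar>\<integral>x. indicator A x * f x \<partial>M\<bar>) \<le> (\<integral>x. \<bar>f x\<bar> \<partial>M) / 2"
    using abs_integral_indicator_le_half_L1[OF f mean0] sets.empty_sets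
    by (intro cSUP_least) auto
next
  let ?P = "{x \<in> space M. 0 < f x}"
  have "?P \<in> sets M"
    using borel_measurable_integrable[OF f] by measurable
  moreover have "bdd_above ((\<lambda>A. \<bar>\<integral>x. indicator A x * f x \<partial>M\<bar>) ` sets M)"
    using abs_integral_indicator_le_half_L1[OF f mean0] by (intro bdd_aboveI2[where M="(\<integral>x. \<bar>f x\<bar> \<partial>M) / 2"]) auto
  ultimately show "(\<integral>x. \<bar>f x\<bar> \<partial>M) / 2 \<le> (SUP A \<in> sets M. \<bar>\<integral>x. indicator A x * f x \<partial>M\<bar>)"
    using integral_indicator_positive_part_eq_half_L1[OF f mean0]
    by (intro cSUP_upper2[where x="?P"]) (auto simp: abs_if)
qed

lemma measure_diff_eq_integral_RN_deriv:
  assumes "prob_space PX" "prob_space PY" and sets_eq: "sets PY = sets PX"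
    and ac: "absolutely_continuous PX PY" and A: "A \<in> sets PX"
  shows "measure PY A - measure PX A
       = (\<integral>x. indicator A x * (enn2real (RN_deriv PX PY x) - 1) \<partial>PX)"
proof -
  interpret X: prob_space PX by fact
  interpret Y: prob_space PY by fact
  let ?L = "\<lambda>x. enn2real (RN_deriv PX PY x)"
  have Y_sf: "sigma_finite_measure PY" ..
  have A_sub: "A \<subseteq> space PX"
    using sets.sets_into_space[OF A] .
  have "measure PY A = (\<integral>x. indicator A x \<partial>PY)"
    using A A_sub sets_eq sets_eq_imp_space_eq[OF sets_eq] by (simp add: Int_absorb2)
  also have "\<dots> = (\<integral>x. ?L x * indicator A x \<partial>PX)"
    using A by (intro X.RN_deriv_integral[OF Y_sf ac sets_eq]) simp
  finally have PY_A: "measure PY A = (\<integral>x. ?L x * indicator A x \<partial>PX)" .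
  have "integrable PX ?L"
    using X.RN_deriv_integrable[OF Y_sf ac sets_eq, of "\<lambda>_. 1"] by simp
  then have "integrable PX (\<lambda>x. ?L x * indicator A x)"
    using integrable_mult_indicator[OF A \<open>integrable PX ?L\<close>] by (simp add: mult.commute)
  moreover have "integrable PX (\<lambda>x. indicator A x :: real)"
    using A by (simp add: X.emeasure_finite less_top[symmetric])
  ultimately show ?thesis
    using PY_A A_sub by (simp add: algebra_simps Int_absorb2)
qed

lemma tv_dist_eq_half_integral_RN_deriv:
  assumes PX: "prob_space PX" and PY: "prob_space PY" and sets_eq: "sets PY = sets PX"
    and ac: "absolutely_continuous PX PY"
  shows "tv_dist PX PY = (\<integral>x. \<bar>enn2real (RN_deriv PX PY x) - 1\<bar> \<partial>PX) / 2"
proof -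
  interpret X: prob_space PX by fact
  interpret Y: prob_space PY by fact
  let ?f = "\<lambda>x. enn2real (RN_deriv PX PY x) - 1"
  have Y_sf: "sigma_finite_measure PY" ..
  have L: "integrable PX (\<lambda>x. enn2real (RN_deriv PX PY x))"
    using X.RN_deriv_integrable[OF Y_sf ac sets_eq, of "\<lambda>_. 1"] by simp
  then have f: "integrable PX ?f"
    by simp
  have "(\<integral>x. enn2real (RN_deriv PX PY x) \<partial>PX) = 1"
    using X.RN_deriv_integral[OF Y_sf ac sets_eq, of "\<lambda>_. 1"] Y.prob_space by simp
  then have mean0: "(\<integral>x. ?f x \<partial>PX) = 0"
    using L X.prob_space by (simp add: Bochner_Integration.integral_diff)
  have "tv_dist PX PY = (SUP A \<in> sets PX. \<bar>\<integral>x. indicator A x * ?f x \<partial>PX\<bar>)"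
    unfolding tv_dist_def
    by (intro SUP_cong refl arg_cong[where f=abs] measure_diff_eq_integral_RN_deriv[OF PX PY sets_eq ac])
  also have "\<dots> = (\<integral>x. \<bar>?f x\<bar> \<partial>PX) / 2"
    using SUP_abs_integral_indicator_eq_half_L1[OF f mean0] .
  finally show ?thesis .
qed

lemma (in prob_space) integrable_pair_diff:
  fixes g :: "'a \<Rightarrow> real"
  assumes g: "integrable M g"
  shows "integrable (M \<Otimes>\<^sub>M M) (\<lambda>z. g (fst z) - g (snd z))"
proof -
  interpret P: pair_sigma_finite M M ..
  have g_fst: "integrable (M \<Otimes>\<^sub>M M) (\<lambda>z. g (fst z))"
    using g distr_pair_fst[of M] integrable_distr_eq[of fst "M \<Otimes>\<^sub>M M" M g]
    by (simp add: borel_measurable_integrable)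
  then have "integrable (M \<Otimes>\<^sub>M M) (\<lambda>(x, y). g (fst (y, x)))"
    using P.integrable_product_swap_iff[of "\<lambda>z. g (fst z)"] by simp
  then have "integrable (M \<Otimes>\<^sub>M M) (\<lambda>z. g (snd z))"
    by (simp add: case_prod_beta')
  with g_fst show ?thesis
    by simp
qed

lemma (in prob_space) integral_abs_pair_diff_bounds:
  fixes g :: "'a \<Rightarrow> real"
  assumes g: "integrable M g"
  defines "D \<equiv> (\<integral>x. \<bar>g x - expectation g\<bar> \<partial>M)"
  shows "D \<le> (\<integral>z. \<bar>g (fst z) - g (snd z)\<bar> \<partial>(M \<Otimes>\<^sub>M M))"
    and "(\<integral>z. \<bar>g (fst z) - g (snd z)\<bar> \<partial>(M \<Otimes>\<^sub>M M)) \<le> 2 * D"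
proof -
  interpret P: pair_sigma_finite M M ..
  let ?c = "expectation g"
  let ?F = "\<lambda>z. \<bar>g (fst z) - g (snd z)\<bar>"
  have F: "integrable (M \<Otimes>\<^sub>M M) ?F"
    using integrable_pair_diff[OF g] by simp
  have iterated: "(\<integral>z. ?F z \<partial>(M \<Otimes>\<^sub>M M)) = (\<integral>x. (\<integral>y. ?F (x, y) \<partial>M) \<partial>M)"
    using P.integral_fst'[OF F] by simp
  have inner: "integrable M (\<lambda>x. \<integral>y. ?F (x, y) \<partial>M)"
    using P.integrable_fst'[OF F] .
  have "\<bar>g x - ?c\<bar> \<le> (\<integral>y. ?F (x, y) \<partial>M)" for x
  proof -
    have "g x - ?c = (\<integral>y. g x - g y \<partial>M)"
      using g prob_space by simp
    also have "\<bar>\<dots>\<bar> \<le> (\<integral>y. \<bar>g x - g y\<bar> \<partial>M)"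
      using integral_norm_bound[of M "\<lambda>y. g x - g y"] by simp
    finally show ?thesis by simp
  qed
  then show "D \<le> (\<integral>z. ?F z \<partial>(M \<Otimes>\<^sub>M M))"
    unfolding iterated D_def using g inner by (intro integral_mono) auto
  have "(\<integral>y. ?F (x, y) \<partial>M) \<le> \<bar>g x - ?c\<bar> + D" for x
  proof -
    have "(\<integral>y. ?F (x, y) \<partial>M) \<le> (\<integral>y. \<bar>g x - ?c\<bar> + \<bar>g y - ?c\<bar> \<partial>M)"
      using g by (intro integral_mono) auto
    also have "\<dots> = \<bar>g x - ?c\<bar> + D"
      using g prob_space by (simp add: D_def)
    finally show ?thesis .
  qed
  then have "(\<integral>x. (\<integral>y. ?F (x, y) \<partial>M) \<partial>M) \<le> (\<integral>x. \<bar>g x - ?c\<bar> + D \<partial>M)"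
    using g inner by (intro integral_mono) auto
  also have "\<dots> = 2 * D"
    using g prob_space by (simp add: D_def)
  finally show "(\<integral>z. ?F z \<partial>(M \<Otimes>\<^sub>M M)) \<le> 2 * D"
    unfolding iterated .
qed

theorem proposition2:
  fixes PX PY :: "'a measure" and L :: "'a \<Rightarrow> real"
  assumes "prob_space PX" and "prob_space PY"
    and "sets PY = sets PX"
    and "absolutely_continuous PX PY"
    and L_def: "L = (\<lambda>x. enn2real (RN_deriv PX PY x))"
    and cont: "\<forall>c. measure PX {x \<in> space PX. L x = c} = 0"
  shows "2 * tv_dist PX PY \<le> (\<integral>z. \<bar>L (fst z) - L (snd z)\<bar> \<partial>(PX \<Otimes>\<^sub>M PX))
       \<and> (\<integral>z. \<bar>L (fst z) - L (snd z)\<bar> \<partial>(PX \<Otimes>\<^sub>M PX)) \<le> 4 * tv_dist PX PY"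
proof -
  interpret X: prob_space PX by fact
  interpret Y: prob_space PY by fact
  have Y_sf: "sigma_finite_measure PY" ..
  have L: "integrable PX L"
    using X.RN_deriv_integrable[OF Y_sf assms(4,3), of "\<lambda>_. 1"] L_def by simp
  have "X.expectation L = 1"
    using X.RN_deriv_integral[OF Y_sf assms(4,3), of "\<lambda>_. 1"] L_def Y.prob_space by simp
  moreover have "tv_dist PX PY = (\<integral>x. \<bar>L x - 1\<bar> \<partial>PX) / 2"
    using tv_dist_eq_half_integral_RN_deriv[OF assms(1-4)] L_def by simp
  ultimately show ?thesis
    using X.integral_abs_pair_diff_bounds[OF L] by simp
qed

end
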